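(* Let $q$ be a prime power, let $b,n,m',s\in\mathbb{N}$ with $b<n$, and set $m=m's$. Let $\mathcal S_q=\{\mathbf x\in\mathbb F_q^n:\mathrm{wt}(\mathbf x)\le b\}$. Fix a primitive polynomial $p(x)$ of degree $s$ over $\mathbb F_q$ and a root $\alpha\in\mathbb F_{q^s}$ of it, and let $\phi_s$ be the associated map $\mathbb F_q^{m\times n}\to\mathbb F_{q^s}^{m'\times n}$ described in the context. Let $\mathbf A\in\mathbb F_q^{m\times n}$ be such that $\phi_s(\mathbf A)$ is a parity check matrix of an $[n,n-m',d]_{q^s}$ linear code with $d>2b$. Then every $\mathbf x\in\mathcal S_q$ can be exactly recovered from the noiseless measurement $\mathbf y=\mathbf A\mathbf x$; that is, there exists a map $D:\mathbb F_q^m\to\mathbb F_q^n$ with $D(\mathbf A\mathbf x)=\mathbf x$ for all $\mathbf x\in\mathcal S_q$.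
   Context: $\mathbb F_q$ denotes the finite field with $q$ elements and $\mathrm{wt}(\mathbf x)$ the number of nonzero entries of a vector $\mathbf x$. A primitive polynomial of degree $s$ over $\mathbb F_q$ is a monic irreducible polynomial of degree $s$ having a primitive element $\alpha$ of $\mathbb F_{q^s}$ (a generator of its multiplicative group) as a root; then $\{1,\alpha,\dots,\alpha^{s-1}\}$ is a basis of $\mathbb F_{q^s}$ over $\mathbb F_q$, and $\mathbb F_q\subseteq\mathbb F_{q^s}$. For $m=m's$ and $\mathbf C=[c_{ij}]\in\mathbb F_q^{m\times n}$, $\phi_s(\mathbf C)=[c'_{kl}]\in\mathbb F_{q^s}^{m'\times n}$ is defined by $c'_{kl}=\sum_{t=0}^{s-1}c_{(k-1)s+t+1,\,l}\,\alpha^t$ ($1\le k\le m'$, $1\le l\le n$). An $[N,K,D]_Q$ linear code is a $K$-dimensional subspace of $\mathbb F_Q^N$ whose minimum Hamming distance between distinct codewords is $D$. A parity check matrix of such a code is an $(N-K)\times N$ matrix over $\mathbb F_Q$ of rank $N-K$ whose null space is the code. *)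

theory Defs
  imports "Jordan_Normal_Form.DL_Rank" "Jordan_Normal_Form.Matrix_Kernel"
    "HOL-Computational_Algebra.Polynomial_Factorial"
begin

definition hamming_wt :: "'a::zero vec \<Rightarrow> nat" where
  "hamming_wt x = card {i. i < dim_vec x \<and> x $ i \<noteq> 0}"

definition hamming_dist :: "'a vec \<Rightarrow> 'a vec \<Rightarrow> nat" where
  "hamming_dist x y = card {i. i < dim_vec x \<and> x $ i \<noteq> y $ i}"

definition is_linear_code :: "nat \<Rightarrow> nat \<Rightarrow> nat \<Rightarrow> 'a::field vec set \<Rightarrow> bool" where
  "is_linear_code N K D C \<longleftrightarrow>
     subspace class_ring C (module_vec TYPE('a) N) \<and>
     vectorspace.dim class_ring ((module_vec TYPE('a) N)\<lparr>carrier := C\<rparr>) = K \<and>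
     (\<exists>x\<in>C. \<exists>y\<in>C. x \<noteq> y \<and> hamming_dist x y = D) \<and>
     (\<forall>x\<in>C. \<forall>y\<in>C. x \<noteq> y \<longrightarrow> D \<le> hamming_dist x y)"

definition is_parity_check_matrix :: "'a::field mat \<Rightarrow> nat \<Rightarrow> nat \<Rightarrow> 'a vec set \<Rightarrow> bool" where
  "is_parity_check_matrix H N K C \<longleftrightarrow>
     H \<in> carrier_mat (N - K) N \<and>
     vec_space.rank (N - K) H = N - K \<and>
     C = mat_kernel H"

definition primitive_element :: "'b::field \<Rightarrow> bool" where
  "primitive_element \<alpha> \<longleftrightarrow> \<alpha> \<noteq> 0 \<and> (\<forall>y. y \<noteq> 0 \<longrightarrow> (\<exists>k::nat. y = \<alpha> ^ k))"

text \<open>The field 'b is an extension of 'a via the (injective) field embedding emb.\<close>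
definition field_embedding :: "('a::field \<Rightarrow> 'b::field) \<Rightarrow> bool" where
  "field_embedding emb \<longleftrightarrow> inj emb \<and> emb 0 = 0 \<and> emb 1 = 1 \<and>
     (\<forall>x y. emb (x + y) = emb x + emb y) \<and> (\<forall>x y. emb (x * y) = emb x * emb y)"

definition primitive_poly_with_root ::
    "('a::field \<Rightarrow> 'b::field) \<Rightarrow> 'a poly \<Rightarrow> nat \<Rightarrow> 'b \<Rightarrow> bool" where
  "primitive_poly_with_root emb p s \<alpha> \<longleftrightarrow>
     lead_coeff p = 1 \<and> irreducible p \<and> degree p = s \<and>
     primitive_element \<alpha> \<and> poly (map_poly emb p) \<alpha> = 0"

text \<open>The map phi_s (0-based indices): c'_{k,l} = sum_{t<s} c_{k s + t, l} alpha^t.\<close>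
definition phi_s :: "('a \<Rightarrow> 'b::comm_ring_1) \<Rightarrow> 'b \<Rightarrow> nat \<Rightarrow> 'a mat \<Rightarrow> 'b mat" where
  "phi_s emb \<alpha> s C = mat (dim_row C div s) (dim_col C)
     (\<lambda>(k, l). \<Sum>t<s. emb (C $$ (k * s + t, l)) * \<alpha> ^ t)"

end

theory Submission
  imports Defs
begin

text \<open>Applying the embedding \<open>F\<^sub>q \<rightarrow> F\<^sub>q\<^sub>^\<^sub>s\<close> entrywise turns a vector \<open>z\<close>
  with \<open>A z = 0\<close> into a vector \<open>w\<close> of the same Hamming weight with \<open>\<phi>\<^sub>s(A) w = 0\<close>, since
  entry \<open>k\<close> of \<open>\<phi>\<^sub>s(A) w\<close> is \<open>\<Sum>\<^sub>t \<alpha>\<^sup>t\<close> times the embedded entry \<open>k s + t\<close> of \<open>A z\<close>.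
  So every nonzero kernel vector of \<open>A\<close> is a nonzero codeword and has weight at least
  \<open>d > 2b\<close>. Two vectors of weight at most \<open>b\<close> with the same measurement differ by a
  kernel vector of weight at most \<open>2b\<close>, hence coincide; the decoder inverts \<open>x \<mapsto> A x\<close>
  on them.\<close>

lemma field_embedding_sum:
  assumes "field_embedding emb"
  shows "emb (sum f S) = (\<Sum>i\<in>S. emb (f i))"
proof (cases "finite S")
  case True
  then show ?thesis
    by (induction S rule: finite_induct) (use assms in \<open>auto simp: field_embedding_def\<close>)
next
  case False
  then show ?thesis using assms by (simp add: field_embedding_def)
qed

lemma field_embedding_eq_0_iff:
  assumes "field_embedding emb"
  shows "emb x = 0 \<longleftrightarrow> x = 0"
  using assms by (metis field_embedding_def injD)

lemma hamming_wt_diff_le: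
  fixes x y :: "'a::ab_group_add vec"
  assumes "x \<in> carrier_vec n" "y \<in> carrier_vec n"
  shows "hamming_wt (x - y) \<le> hamming_wt x + hamming_wt y"
proof -
  have "{i. i < dim_vec (x - y) \<and> (x - y) $ i \<noteq> 0} \<subseteq>
        {i. i < dim_vec x \<and> x $ i \<noteq> 0} \<union> {i. i < dim_vec y \<and> y $ i \<noteq> 0}"
    using assms by auto
  then have "hamming_wt (x - y) \<le>
        card ({i. i < dim_vec x \<and> x $ i \<noteq> 0} \<union> {i. i < dim_vec y \<and> y $ i \<noteq> 0})"
    unfolding hamming_wt_def by (intro card_mono) auto
  also have "\<dots> \<le> hamming_wt x + hamming_wt y"
    unfolding hamming_wt_def by (rule card_Un_le)
  finally show ?thesis .
qed

lemma hamming_wt_eq_0_iff: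
  assumes "x \<in> carrier_vec n"
  shows "hamming_wt x = 0 \<longleftrightarrow> x = 0\<^sub>v n"
  using assms by (auto simp: hamming_wt_def)

lemma hamming_dist_zero_right:
  assumes "x \<in> carrier_vec n"
  shows "hamming_dist x (0\<^sub>v n) = hamming_wt x"
  using assms unfolding hamming_dist_def hamming_wt_def by (intro arg_cong[where f = card]) auto

lemma hamming_wt_map_vec:
  assumes "inj f" "f 0 = 0"
  shows "hamming_wt (map_vec f x) = hamming_wt x"
  unfolding hamming_wt_def using assms by (intro arg_cong[where f = card]) (auto; metis injD)

lemma parity_check_min_weight:
  assumes "is_linear_code N K D C" "is_parity_check_matrix H N K C"
    and "w \<in> carrier_vec N" "H *\<^sub>v w = 0\<^sub>v (N - K)" "w \<noteq> 0\<^sub>v N"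
  shows "D \<le> hamming_wt w"
proof -
  have H: "H \<in> carrier_mat (N - K) N" and C: "C = mat_kernel H"
    using assms(2) by (auto simp: is_parity_check_matrix_def)
  have "H *\<^sub>v 0\<^sub>v N = 0\<^sub>v (N - K)"
    using H by (intro eq_vecI) auto
  then have "w \<in> C" "0\<^sub>v N \<in> C"
    using mat_kernelI[OF H] assms(3,4) by (auto simp: C)
  then have "D \<le> hamming_dist w (0\<^sub>v N)"
    using assms(1,5) unfolding is_linear_code_def by blast
  then show ?thesis using hamming_dist_zero_right[OF assms(3)] by simp
qed

lemma block_index_less:
  fixes k m s t :: nat
  assumes "k < m div s" "t < s"
  shows "k * s + t < m"
proof -
  have "(k + 1) * s \<le> m div s * s" using assms(1) by (intro mult_le_mono1) simp
  also have "\<dots> \<le> m" by (rule div_times_less_eq_dividend)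
  finally show ?thesis using assms(2) by (simp add: add_mult_distrib)
qed

lemma phi_s_mult_map_vec:
  assumes emb: "field_embedding emb"
    and A: "A \<in> carrier_mat m n" and z: "z \<in> carrier_vec n" and k: "k < m div s"
  shows "(phi_s emb \<alpha> s A *\<^sub>v map_vec emb z) $ k = (\<Sum>t<s. \<alpha> ^ t * emb ((A *\<^sub>v z) $ (k * s + t)))"
proof -
  have "(phi_s emb \<alpha> s A *\<^sub>v map_vec emb z) $ k =
      (\<Sum>l<n. \<Sum>t<s. emb (A $$ (k * s + t, l)) * \<alpha> ^ t * emb (z $ l))"
    using k A z
    by (auto simp: phi_s_def mult_mat_vec_def scalar_prod_def lessThan_atLeast0
        sum_distrib_right intro!: sum.cong)
  also have "\<dots> = (\<Sum>t<s. \<alpha> ^ t * emb (\<Sum>l<n. A $$ (k * s + t, l) * z $ l))"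
    using emb by (subst sum.swap)
      (auto simp: field_embedding_sum field_embedding_def sum_distrib_left mult_ac intro!: sum.cong)
  also have "\<dots> = (\<Sum>t<s. \<alpha> ^ t * emb ((A *\<^sub>v z) $ (k * s + t)))"
    using block_index_less[OF k] A z
    by (intro sum.cong refl) (simp add: mult_mat_vec_def scalar_prod_def lessThan_atLeast0)
  finally show ?thesis .
qed

lemma phi_s_map_vec_kernel:
  assumes "field_embedding emb"
    and "A \<in> carrier_mat m n" "z \<in> carrier_vec n" "A *\<^sub>v z = 0\<^sub>v m"
  shows "phi_s emb \<alpha> s A *\<^sub>v map_vec emb z = 0\<^sub>v (dim_row (phi_s emb \<alpha> s A))"
proof (rule eq_vecI)
  fix k assume "k < dim_vec (0\<^sub>v (dim_row (phi_s emb \<alpha> s A)) :: 'b vec)"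
  then have k: "k < m div s" using assms(2) by (simp add: phi_s_def)
  then show "(phi_s emb \<alpha> s A *\<^sub>v map_vec emb z) $ k = 0\<^sub>v (dim_row (phi_s emb \<alpha> s A)) $ k"
    using phi_s_mult_map_vec[OF assms(1-3) k] block_index_less[OF k] assms(2,4)
      field_embedding_eq_0_iff[OF assms(1)]
    by (simp add: phi_s_def)
qed simp

lemma exists_decoder_if_kernel_weight_gt:
  fixes A :: "'a::ring mat"
  assumes A: "A \<in> carrier_mat m n"
    and heavy: "\<And>z. z \<in> carrier_vec n \<Longrightarrow> A *\<^sub>v z = 0\<^sub>v m \<Longrightarrow> z \<noteq> 0\<^sub>v n \<Longrightarrow> 2 * b < hamming_wt z"
  shows "\<exists>D. \<forall>x \<in> carrier_vec n. hamming_wt x \<le> b \<longrightarrow> D (A *\<^sub>v x) = x"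
proof -
  let ?S = "{x \<in> carrier_vec n. hamming_wt x \<le> b}"
  have "inj_on (\<lambda>x. A *\<^sub>v x) ?S"
  proof (rule inj_onI)
    fix x y assume "x \<in> ?S" "y \<in> ?S" and eq: "A *\<^sub>v x = A *\<^sub>v y"
    then have x: "x \<in> carrier_vec n" "hamming_wt x \<le> b"
      and y: "y \<in> carrier_vec n" "hamming_wt y \<le> b" by auto
    have "A *\<^sub>v (x - y) = 0\<^sub>v m"
      using A x(1) y(1) eq by (simp add: mult_minus_distrib_mat_vec)
    moreover have "hamming_wt (x - y) \<le> 2 * b"
      using hamming_wt_diff_le[OF x(1) y(1)] x(2) y(2) by simp
    ultimately have diff: "x - y = 0\<^sub>v n"
      using heavy[of "x - y"] x(1) y(1) by fastforce
    show "x = y"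
    proof (rule eq_vecI)
      fix i assume i: "i < dim_vec y"
      then have "(x - y) $ i = 0" using diff y(1) by simp
      then show "x $ i = y $ i" using i by simp
    qed (use x(1) y(1) in simp)
  qed
  then show ?thesis by (intro exI[of _ "inv_into ?S (\<lambda>x. A *\<^sub>v x)"]) auto
qed

theorem theorem1:
  fixes emb :: "'a::{field,finite} \<Rightarrow> 'b::{field,finite}"
    and p :: "'a poly" and \<alpha> :: "'b"
    and b n m' s m d :: nat
    and A :: "'a mat"
  assumes "b < n"
    and "m = m' * s"
    and "field_embedding emb"
    and "card (UNIV :: 'b set) = card (UNIV :: 'a set) ^ s"
    and "primitive_poly_with_root emb p s \<alpha>"
    and "A \<in> carrier_mat m n"
    and "\<exists>C. is_linear_code n (n - m') d C \<and>
              is_parity_check_matrix (phi_s emb \<alpha> s A) n (n - m') C"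
    and "d > 2 * b"
  shows "\<exists>D :: 'a vec \<Rightarrow> 'a vec. \<forall>x \<in> carrier_vec n. hamming_wt x \<le> b \<longrightarrow> D (A *\<^sub>v x) = x"
proof (rule exists_decoder_if_kernel_weight_gt[OF assms(6)])
  obtain C where code: "is_linear_code n (n - m') d C"
    and check: "is_parity_check_matrix (phi_s emb \<alpha> s A) n (n - m') C"
    using assms(7) by blast
  have emb: "inj emb" "emb 0 = 0" using assms(3) by (auto simp: field_embedding_def)
  fix z assume z: "z \<in> carrier_vec n" "A *\<^sub>v z = 0\<^sub>v m" "z \<noteq> 0\<^sub>v n"
  have "phi_s emb \<alpha> s A *\<^sub>v map_vec emb z = 0\<^sub>v (n - (n - m'))"
    using phi_s_map_vec_kernel[OF assms(3,6) z(1,2)] check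
    by (auto simp: is_parity_check_matrix_def)
  moreover have "map_vec emb z \<noteq> 0\<^sub>v n"
    using z(1,3) hamming_wt_eq_0_iff[of _ n] hamming_wt_map_vec[OF emb] by (metis map_carrier_vec)
  ultimately have "d \<le> hamming_wt (map_vec emb z)"
    using parity_check_min_weight[OF code check] z(1) by simp
  then show "2 * b < hamming_wt z" using assms(8) hamming_wt_map_vec[OF emb] by simp
qed

end
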